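(* Fix an integer $b>1$. For each positive integer $m$, let $k_m=r+1$, where $r\ge 0$ is the exponent with $b^r\mid m$ and $b^{r+1}\nmid m$. Then, as formal power series in $q$, $$\sum_{n=0}^\infty p(n)q^n \equiv \prod_{m=1}^\infty \left(1+q^m+q^{2m}+\cdots+q^{(b-1)m}\right)^{k_m} \pmod{b},$$ where the congruence means that the coefficients of $q^n$ agree modulo $b$ for every $n$. Equivalently, the number of partitions of $n$ is congruent modulo $b$ to the number of partitions of $n$ in which, for each $m$, parts of size $m$ come in $k_m$ distinct types and each type of part of size $m$ appears at most $b-1$ times.
   Context: $p(n)$ denotes the number of partitions of $n$, with $p(0)=1$. *)

theory Defs
  imports "HOL-Library.Multiset" "HOL-Computational_Algebra.Computational_Algebra" "HOL-Number_Theory.Cong"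
begin

definition partitions_of :: "nat \<Rightarrow> nat multiset set" where
  "partitions_of n = {M. (\<forall>x\<in>#M. 0 < x) \<and> sum_mset M = n}"

definition partition_count :: "nat \<Rightarrow> nat" where
  "partition_count n = card (partitions_of n)"

definition kexp :: "nat \<Rightarrow> nat \<Rightarrow> nat" where
  "kexp b m = Suc (GREATEST r. b ^ r dvd m)"

definition geom_factor :: "nat \<Rightarrow> nat \<Rightarrow> int fps" where
  "geom_factor b m = (\<Sum>j<b. fps_X ^ (j * m))"

end

theory Submission
  imports Defs
begin

text \<open>
  Telescoping \<open>(1 - q\<^sup>m) \<cdot> geom_factor b m = 1 - q\<^sup>b\<^sup>m\<close> gives
  \<open>1/(1 - q\<^sup>m) = \<Prod>\<^sub>i\<^sub>\<ge>\<^sub>0 geom_factor b (b\<^sup>i m)\<close>. In the product of these over all \<open>m\<close>,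
  the factor \<open>geom_factor b y\<close> occurs once for each way of writing \<open>y = b\<^sup>i m\<close>, i.e. once
  for each \<open>i\<close> with \<open>b\<^sup>i dvd y\<close>, which is \<open>k\<^sub>y\<close> times. So the partition generating function
  equals the product on the nose, and the congruence modulo \<open>b\<close> holds trivially. Infinite
  products are avoided by comparing coefficients below \<open>q\<^sup>N\<^sup>+\<^sup>1\<close> only (\<open>fps_cutoff\<close>).
\<close>

lemma fps_cutoff_mult_cong:
  assumes "fps_cutoff n f = fps_cutoff n f'" "fps_cutoff n g = fps_cutoff n g'"
  shows "fps_cutoff n (f * g) = fps_cutoff n (f' * g')"
proof -
  have "(f * g) $ k = (f' * g') $ k" if "k < n" for k
  proof -
    have "(f * g) $ k = (fps_cutoff n f * fps_cutoff n g) $ k"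
      using that by (simp add: fps_cutoff_left_mult_nth fps_cutoff_right_mult_nth)
    also have "\<dots> = (f' * g') $ k"
      using that by (simp add: assms fps_cutoff_left_mult_nth fps_cutoff_right_mult_nth)
    finally show ?thesis .
  qed
  then show ?thesis by (simp add: fps_cutoff_eq_fps_cutoff_iff)
qed

lemma fps_cutoff_prod_cong:
  "finite A \<Longrightarrow> (\<And>x. x \<in> A \<Longrightarrow> fps_cutoff n (f x) = fps_cutoff n (g x)) \<Longrightarrow>
   fps_cutoff n (\<Prod>x\<in>A. f x) = fps_cutoff n (\<Prod>x\<in>A. g x)"
  by (induction A rule: finite_induct) (auto intro: fps_cutoff_mult_cong)

definition fps_multiples :: "nat \<Rightarrow> int fps" where
  "fps_multiples m = Abs_fps (\<lambda>n. of_bool (m dvd n))"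

lemma fps_multiples_times_one_minus:
  assumes "m > 0"
  shows "fps_multiples m * (1 - fps_X ^ m) = 1"
proof (rule fps_ext)
  fix n
  have "(fps_multiples m * (1 - fps_X ^ m)) $ n = fps_multiples m $ n - (fps_X ^ m * fps_multiples m) $ n"
    by (simp add: algebra_simps)
  also have "\<dots> = 1 $ n"
    using assms by (auto simp: fps_X_power_mult_nth fps_multiples_def dvd_minus_self dest: dvd_imp_le)
  finally show "(fps_multiples m * (1 - fps_X ^ m)) $ n = 1 $ n" .
qed

lemma geom_factor_times_one_minus: "geom_factor b m * (1 - fps_X ^ m) = 1 - fps_X ^ (b * m)"
proof -
  have "geom_factor b m * (1 - fps_X ^ m) = (\<Sum>j<b. fps_X ^ (j * m) - fps_X ^ (Suc j * m))"
    unfolding geom_factor_def sum_distrib_right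
    by (rule sum.cong) (simp_all add: algebra_simps power_add)
  also have "\<dots> = 1 - fps_X ^ (b * m)"
    by (subst sum_lessThan_telescope'[where f = "\<lambda>j. fps_X ^ (j * m)"]) simp
  finally show ?thesis .
qed

lemma fps_multiples_eq_geom_factor_times:
  assumes "m > 0" "b > 0"
  shows "fps_multiples m = geom_factor b m * fps_multiples (b * m)"
proof -
  have "fps_multiples m = fps_multiples m * (fps_multiples (b * m) * (1 - fps_X ^ (b * m)))"
    using fps_multiples_times_one_minus[of "b * m"] assms by simp
  also have "\<dots> = (fps_multiples m * (1 - fps_X ^ m)) * geom_factor b m * fps_multiples (b * m)"
    by (simp add: geom_factor_times_one_minus[symmetric] algebra_simps)
  finally show ?thesis
    using fps_multiples_times_one_minus[OF assms(1)] by simp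
qed

lemma fps_multiples_eq_prod_geom_factor:
  assumes "m > 0" "b > 0"
  shows "fps_multiples m = (\<Prod>i<t. geom_factor b (b ^ i * m)) * fps_multiples (b ^ t * m)"
proof (induction t)
  case (Suc t)
  then show ?case
    using fps_multiples_eq_geom_factor_times[of "b ^ t * m" b] assms
    by (simp add: algebra_simps)
qed simp

lemma fps_cutoff_fps_multiples_beyond: "N < m \<Longrightarrow> fps_cutoff (Suc N) (fps_multiples m) = 1"
  by (rule fps_ext) (auto simp: fps_multiples_def dest: dvd_imp_le)

lemma fps_cutoff_geom_factor_beyond:
  assumes "N < m" "b > 0"
  shows "fps_cutoff (Suc N) (geom_factor b m) = 1"
proof (rule fps_ext)
  fix n
  show "fps_cutoff (Suc N) (geom_factor b m) $ n = 1 $ n"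
  proof (cases "n \<le> N")
    case True
    have "geom_factor b m $ n = (\<Sum>j<b. if n = j * m then 1 else 0)"
      by (simp add: geom_factor_def fps_sum_nth)
    also have "\<dots> = (\<Sum>j\<in>{0}. if n = j * m then 1 else 0)"
    proof (intro sum.mono_neutral_right)
      have "n \<noteq> j * m" if "j > 0" for j
      proof -
        have "m \<le> j * m" using that by simp
        then show ?thesis using True assms(1) by linarith
      qed
      then show "\<forall>j\<in>{..<b} - {0}. (if n = j * m then 1 else 0) = (0::int)" by auto
    qed (use assms(2) in auto)
    finally show ?thesis using True by simp
  qed simp
qed

lemma power_mult_le_imp_less:
  fixes b m :: nat
  assumes "b > 1" "m > 0" "b ^ i * m \<le> N"
  shows "i < N"
proof -
  have "i < b ^ i" using power_gt_expt[of b i] assms(1) by simp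
  also have "\<dots> \<le> b ^ i * m" using assms(2) by simp
  finally show ?thesis using assms(3) by simp
qed

lemma finite_power_mult_le:
  fixes b m :: nat
  assumes "b > 1" "m > 0"
  shows "finite {i. b ^ i * m \<le> N}"
  using power_mult_le_imp_less[OF assms] by (auto intro: finite_subset[of _ "{..<N}"])

lemma fps_cutoff_fps_multiples:
  assumes "b > 1" "m > 0"
  shows "fps_cutoff (Suc N) (fps_multiples m)
           = fps_cutoff (Suc N) (\<Prod>i\<in>{i. b ^ i * m \<le> N}. geom_factor b (b ^ i * m))"
proof -
  have "Suc N < b ^ Suc N" using power_gt_expt[of b "Suc N"] assms(1) by simp
  also have "\<dots> \<le> b ^ Suc N * m" using assms(2) by simp
  finally have tail: "fps_cutoff (Suc N) (fps_multiples (b ^ Suc N * m)) = fps_cutoff (Suc N) 1"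
    by (simp add: fps_cutoff_fps_multiples_beyond fps_cutoff_one)
  have "fps_cutoff (Suc N) (fps_multiples m)
          = fps_cutoff (Suc N) ((\<Prod>i<Suc N. geom_factor b (b ^ i * m)) * fps_multiples (b ^ Suc N * m))"
    by (subst fps_multiples_eq_prod_geom_factor[of m b "Suc N"]) (use assms in simp_all)
  also have "\<dots> = fps_cutoff (Suc N) ((\<Prod>i<Suc N. geom_factor b (b ^ i * m)) * 1)"
    by (rule fps_cutoff_mult_cong[OF refl tail])
  also have "\<dots> = fps_cutoff (Suc N)
                    (\<Prod>i<Suc N. if b ^ i * m \<le> N then geom_factor b (b ^ i * m) else 1)"
    unfolding mult_1_right
  proof (rule fps_cutoff_prod_cong)
    fix i
    show "fps_cutoff (Suc N) (geom_factor b (b ^ i * m))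
            = fps_cutoff (Suc N) (if b ^ i * m \<le> N then geom_factor b (b ^ i * m) else 1)"
      using fps_cutoff_geom_factor_beyond[of N "b ^ i * m" b] assms(1)
      by (simp add: fps_cutoff_one)
  qed simp
  also have "(\<Prod>i<Suc N. if b ^ i * m \<le> N then geom_factor b (b ^ i * m) else 1)
               = (\<Prod>i\<in>{i\<in>{..<Suc N}. b ^ i * m \<le> N}. geom_factor b (b ^ i * m))"
    by (rule prod.inter_filter[symmetric]) simp
  also have "{i\<in>{..<Suc N}. b ^ i * m \<le> N} = {i. b ^ i * m \<le> N}"
    using power_mult_le_imp_less[OF assms] by fastforce
  finally show ?thesis .
qed

lemma card_power_dvd_eq_kexp:
  fixes b y :: nat
  assumes "b > 1" "y > 0"
  shows "card {r. b ^ r dvd y} = kexp b y"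
proof -
  have bound: "r < y" if "b ^ r dvd y" for r
    using power_gt_expt[of b r] dvd_imp_le[OF that assms(2)] assms(1) by simp
  define v where "v = (GREATEST r. b ^ r dvd y)"
  have "b ^ v dvd y"
    unfolding v_def by (rule GreatestI_nat[of _ 0]) (use bound in \<open>auto intro: less_imp_le\<close>)
  moreover have "r \<le> v" if "b ^ r dvd y" for r
    unfolding v_def using that by (rule Greatest_le_nat[where b = y]) (auto dest: bound)
  ultimately have "{r. b ^ r dvd y} = {..v}"
    by (auto intro: dvd_trans[OF le_imp_power_dvd])
  then show ?thesis by (simp add: kexp_def v_def)
qed

lemma card_power_mult_fiber:
  fixes b :: nat
  assumes "b > 1" "y \<in> {1..N}"
  shows "card {(m, i) \<in> Sigma {1..N} (\<lambda>m. {i. b ^ i * m \<le> N}). b ^ i * m = y} = kexp b y"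
proof -
  have "bij_betw snd {(m, i) \<in> Sigma {1..N} (\<lambda>m. {i. b ^ i * m \<le> N}). b ^ i * m = y}
          {r. b ^ r dvd y}"
  proof (rule bij_betw_byWitness[where f' = "\<lambda>r. (y div b ^ r, r)"])
    show "(\<lambda>r. (y div b ^ r, r)) ` {r. b ^ r dvd y}
            \<subseteq> {(m, i) \<in> Sigma {1..N} (\<lambda>m. {i. b ^ i * m \<le> N}). b ^ i * m = y}"
    proof (rule image_subsetI)
      fix r assume "r \<in> {r. b ^ r dvd y}"
      then have r: "b ^ r dvd y" by simp
      then have "y div b ^ r > 0"
        using assms by (auto simp: dvd_div_eq_0_iff)
      moreover have "y div b ^ r \<le> N"
        using div_le_dividend[of y "b ^ r"] assms(2) by (simp del: div_le_dividend)
      ultimately show "(y div b ^ r, r)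
            \<in> {(m, i) \<in> Sigma {1..N} (\<lambda>m. {i. b ^ i * m \<le> N}). b ^ i * m = y}"
        using r assms(2) by auto
    qed
  qed (use assms(1) in auto)
  then have "card {(m, i) \<in> Sigma {1..N} (\<lambda>m. {i. b ^ i * m \<le> N}). b ^ i * m = y}
               = card {r. b ^ r dvd y}"
    by (rule bij_betw_same_card)
  also have "\<dots> = kexp b y"
    using assms by (intro card_power_dvd_eq_kexp) auto
  finally show ?thesis .
qed

lemma prod_power_mult_regroup:
  fixes f :: "nat \<Rightarrow> 'a :: comm_monoid_mult" and b :: nat
  assumes "b > 1"
  shows "(\<Prod>m\<in>{1..N}. \<Prod>i\<in>{i. b ^ i * m \<le> N}. f (b ^ i * m)) = (\<Prod>y\<in>{1..N}. f y ^ kexp b y)"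
proof -
  define S where "S = Sigma {1..N} (\<lambda>m. {i. b ^ i * m \<le> N})"
  define g where "g = (\<lambda>(m, i). b ^ i * m)"
  have "finite S"
    unfolding S_def using finite_power_mult_le[OF assms] by auto
  have "(\<Prod>m\<in>{1..N}. \<Prod>i\<in>{i. b ^ i * m \<le> N}. f (b ^ i * m)) = (\<Prod>p\<in>S. f (g p))"
    unfolding S_def g_def using finite_power_mult_le[OF assms]
    by (subst prod.Sigma) (auto simp: case_prod_beta)
  also have "\<dots> = (\<Prod>y\<in>{1..N}. \<Prod>p\<in>{p \<in> S. g p = y}. f (g p))"
    using \<open>finite S\<close> assms
    by (intro prod.group[symmetric]) (auto simp: S_def g_def Suc_le_eq)
  also have "\<dots> = (\<Prod>y\<in>{1..N}. f y ^ kexp b y)"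
  proof (rule prod.cong[OF refl])
    fix y assume "y \<in> {1..N}"
    moreover have "{p \<in> S. g p = y} = {(m, i) \<in> S. b ^ i * m = y}"
      by (auto simp: g_def)
    ultimately have "card {p \<in> S. g p = y} = kexp b y"
      using card_power_mult_fiber[OF assms] unfolding S_def by simp
    then show "(\<Prod>p\<in>{p \<in> S. g p = y}. f (g p)) = f y ^ kexp b y"
      by simp
  qed
  finally show ?thesis .
qed

definition partitions_with_parts :: "nat set \<Rightarrow> nat \<Rightarrow> nat multiset set" where
  "partitions_with_parts A n = {M. set_mset M \<subseteq> A \<and> sum_mset M = n}"

lemma partitions_of_eq_partitions_with_parts:
  assumes "n \<le> N"
  shows "partitions_of n = partitions_with_parts {1..N} n"
  unfolding partitions_of_def partitions_with_parts_def
proof safe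
  fix M x assume M: "\<forall>x\<in>#M. 0 < x" "n = sum_mset M" and "x \<in># M"
  then obtain M' where "M = add_mset x M'"
    by (blast dest: multi_member_split)
  then have "x \<le> n"
    using M(2) by simp
  then show "x \<in> {1..N}"
    using M(1) \<open>x \<in># M\<close> assms by (auto simp: Suc_le_eq)
qed auto

lemma bij_betw_split_part:
  assumes "a \<notin> A" "a > 0"
  shows "bij_betw (\<lambda>M. (count M a, filter_mset (\<lambda>x. x \<noteq> a) M))
           (partitions_with_parts (insert a A) n)
           (SIGMA j:{j. j * a \<le> n}. partitions_with_parts A (n - j * a))"
proof (rule bij_betw_byWitness[where f' = "\<lambda>(j, M'). M' + replicate_mset j a"])
  have decomp: "filter_mset (\<lambda>x. x \<noteq> a) M + replicate_mset (count M a) a = M" for M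
    by (simp add: multiset_eq_iff)
  then show "\<forall>M\<in>partitions_with_parts (insert a A) n.
      (case (count M a, filter_mset (\<lambda>x. x \<noteq> a) M) of (j, M') \<Rightarrow> M' + replicate_mset j a) = M"
    by simp
  show "\<forall>p\<in>SIGMA j:{j. j * a \<le> n}. partitions_with_parts A (n - j * a).
      (\<lambda>M. (count M a, filter_mset (\<lambda>x. x \<noteq> a) M)) (case p of (j, M') \<Rightarrow> M' + replicate_mset j a) = p"
  proof (rule ballI)
    fix p assume "p \<in> (SIGMA j:{j. j * a \<le> n}. partitions_with_parts A (n - j * a))"
    then obtain j M' where [simp]: "p = (j, M')" and "set_mset M' \<subseteq> A"
      by (auto simp: partitions_with_parts_def)
    then have "count M' a = 0"
      using assms(1) by (auto simp: count_eq_zero_iff)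
    then show "(\<lambda>M. (count M a, filter_mset (\<lambda>x. x \<noteq> a) M)) (case p of (j, M') \<Rightarrow> M' + replicate_mset j a) = p"
      by (auto simp: multiset_eq_iff)
  qed
  show "(\<lambda>M. (count M a, filter_mset (\<lambda>x. x \<noteq> a) M)) ` partitions_with_parts (insert a A) n
          \<subseteq> (SIGMA j:{j. j * a \<le> n}. partitions_with_parts A (n - j * a))"
  proof (rule image_subsetI)
    fix M assume "M \<in> partitions_with_parts (insert a A) n"
    moreover have "sum_mset M = sum_mset (filter_mset (\<lambda>x. x \<noteq> a) M) + count M a * a"
      by (subst (1) decomp[of M, symmetric]) simp
    ultimately show "(count M a, filter_mset (\<lambda>x. x \<noteq> a) M)
                       \<in> (SIGMA j:{j. j * a \<le> n}. partitions_with_parts A (n - j * a))"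
      by (auto simp: partitions_with_parts_def)
  qed
  show "(\<lambda>(j, M'). M' + replicate_mset j a) ` (SIGMA j:{j. j * a \<le> n}. partitions_with_parts A (n - j * a))
          \<subseteq> partitions_with_parts (insert a A) n"
    by (force simp: partitions_with_parts_def split: if_splits)
qed

lemma fps_multiples_mult_nth:
  assumes "a > 0"
  shows "(fps_multiples a * f) $ n = (\<Sum>j\<in>{j. j * a \<le> n}. f $ (n - j * a))"
proof -
  have "(fps_multiples a * f) $ n = (\<Sum>i=0..n. if a dvd i then f $ (n - i) else 0)"
    unfolding fps_mult_nth fps_multiples_def by (intro sum.cong) auto
  also have "\<dots> = (\<Sum>i\<in>{i\<in>{0..n}. a dvd i}. f $ (n - i))"
    by (rule sum.inter_filter[symmetric]) simp
  also have "{i\<in>{0..n}. a dvd i} = (\<lambda>j. j * a) ` {j. j * a \<le> n}"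
    by (auto simp: image_def dvd_def mult.commute)
  also have "(\<Sum>i\<in>(\<lambda>j. j * a) ` {j. j * a \<le> n}. f $ (n - i)) = (\<Sum>j\<in>{j. j * a \<le> n}. f $ (n - j * a))"
    using assms by (subst sum.reindex) (auto simp: inj_on_def)
  finally show ?thesis .
qed

lemma card_partitions_with_parts:
  assumes "finite A" "0 \<notin> A"
  shows "finite (partitions_with_parts A n)
         \<and> int (card (partitions_with_parts A n)) = (\<Prod>m\<in>A. fps_multiples m) $ n"
  using assms
proof (induction A arbitrary: n rule: finite_induct)
  case empty
  have "partitions_with_parts {} n = (if n = 0 then {{#}} else {})"
    by (auto simp: partitions_with_parts_def)
  then show ?case by simp
next
  case (insert a A)
  then have "a > 0" by auto
  have "j \<le> n" if "j * a \<le> n" for j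
  proof -
    have "j \<le> j * a" using \<open>a > 0\<close> by simp
    with that show ?thesis by linarith
  qed
  then have fin_mult: "finite {j. j * a \<le> n}"
    by (auto intro: finite_subset[of _ "{..n}"])
  with insert.IH insert.prems
  have fin: "finite (SIGMA j:{j. j * a \<le> n}. partitions_with_parts A (n - j * a))"
    by auto
  note bij = bij_betw_split_part[OF insert.hyps(2) \<open>a > 0\<close>, of n]
  have "int (card (partitions_with_parts (insert a A) n))
          = int (card (SIGMA j:{j. j * a \<le> n}. partitions_with_parts A (n - j * a)))"
    using bij_betw_same_card[OF bij] by simp
  also have "\<dots> = (\<Sum>j\<in>{j. j * a \<le> n}. int (card (partitions_with_parts A (n - j * a))))"
    using fin_mult insert.IH insert.prems by (subst card_SigmaI) auto
  also have "\<dots> = (fps_multiples a * (\<Prod>m\<in>A. fps_multiples m)) $ n"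
    using insert.IH insert.prems \<open>a > 0\<close> by (simp add: fps_multiples_mult_nth)
  finally show ?case
    using bij_betw_finite[OF bij] fin insert.hyps by simp
qed

theorem theorem3:
  fixes b n N :: nat
  assumes "b > 1" and "n \<le> N"
  shows "[int (partition_count n)
          = fps_nth (\<Prod>m\<in>{1..N}. geom_factor b m ^ kexp b m) n] (mod int b)"
proof -
  have "int (partition_count n) = (\<Prod>m\<in>{1..N}. fps_multiples m) $ n"
    using card_partitions_with_parts[of "{1..N}" n]
    by (simp add: partition_count_def partitions_of_eq_partitions_with_parts[OF assms(2)])
  also have "\<dots> = (\<Prod>m\<in>{1..N}. geom_factor b m ^ kexp b m) $ n"
  proof -
    have "fps_cutoff (Suc N) (\<Prod>m\<in>{1..N}. fps_multiples m)
            = fps_cutoff (Suc N) (\<Prod>m\<in>{1..N}. \<Prod>i\<in>{i. b ^ i * m \<le> N}. geom_factor b (b ^ i * m))"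
      using assms(1) by (intro fps_cutoff_prod_cong fps_cutoff_fps_multiples) auto
    also have "\<dots> = fps_cutoff (Suc N) (\<Prod>m\<in>{1..N}. geom_factor b m ^ kexp b m)"
      by (simp only: prod_power_mult_regroup[OF assms(1)])
    finally show ?thesis
      using assms(2) by (simp add: fps_cutoff_eq_fps_cutoff_iff)
  qed
  finally show ?thesis by simp
qed

end
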